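(* Let $f:\mathbb{N}\to[0,\infty)$ be weakly super-multiplicative with normal order $g:(0,\infty)\to(0,\infty)$, where $g$ is either non-decreasing or $\log$-uniformly continuous. Then for every $n\in\mathbb{N}$ and every $\epsilon>0$ there exist $\gamma$ with $0<\gamma\le\epsilon$ and $x_0>0$ such that for all real $x>x_0$, \[ g\big(n(1+\gamma)x\big)\;\ge\;(1-5\epsilon)\,f(n)\,g(x). \]
   Context: A function $f:\mathbb{N}\to[0,\infty)$ is weakly super-multiplicative if for all $n\in\mathbb{N}$ and all $\epsilon>0$ there exist $x_0>0$ and $\delta>0$ such that for all real $x>x_0$, $\#\{m\in\mathbb{N}\cap[x,(1+\epsilon)x]: f(nm)\ge(1-\epsilon)f(n)f(m)\}\ge\delta x$. A function $f:\mathbb{N}\to[0,\infty)$ has normal order $g$ if for every $\epsilon>0$ the set $\{n\in\mathbb{N}: |f(n)-g(n)|\ge\epsilon g(n)\}$ has upper (natural) density $0$. A function $g:(0,\infty)\to(0,\infty)$ is $\log$-uniformly continuous if for every $\epsilon>0$ there is $\delta>0$ such that for all $x,y>0$ with $|x/y-1|<\delta$ we have $|g(x)/g(y)-1|<\epsilon$. *)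

theory Defs
  imports "HOL-Analysis.Analysis"
begin

text \<open>Convention: the natural numbers are the positive integers 1,2,3,...;
  f is a function on type nat whose value at 0 is irrelevant.\<close>

definition weakly_super_multiplicative :: "(nat \<Rightarrow> real) \<Rightarrow> bool" where
  "weakly_super_multiplicative f \<longleftrightarrow>
     (\<forall>n::nat. n \<ge> 1 \<longrightarrow> (\<forall>\<epsilon>::real. \<epsilon> > 0 \<longrightarrow>
        (\<exists>x0::real. x0 > 0 \<and> (\<exists>\<delta>::real. \<delta> > 0 \<and>
           (\<forall>x::real. x > x0 \<longrightarrow>
              real (card {m::nat. m \<ge> 1 \<and> x \<le> real m \<and> real m \<le> (1 + \<epsilon>) * x
                           \<and> f (n * m) \<ge> (1 - \<epsilon>) * f n * f m}) \<ge> \<delta> * x)))))"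

definition upper_density :: "nat set \<Rightarrow> ereal" where
  "upper_density S = limsup (\<lambda>N::nat. ereal (real (card {k \<in> S. 1 \<le> k \<and> k \<le> N}) / real N))"

definition has_normal_order :: "(nat \<Rightarrow> real) \<Rightarrow> (real \<Rightarrow> real) \<Rightarrow> bool" where
  "has_normal_order f g \<longleftrightarrow>
     (\<forall>\<epsilon>::real. \<epsilon> > 0 \<longrightarrow>
        upper_density {n::nat. n \<ge> 1 \<and> \<bar>f n - g (real n)\<bar> \<ge> \<epsilon> * g (real n)} = 0)"

definition log_uniformly_continuous :: "(real \<Rightarrow> real) \<Rightarrow> bool" where
  "log_uniformly_continuous g \<longleftrightarrow>
     (\<forall>\<epsilon>::real. \<epsilon> > 0 \<longrightarrow> (\<exists>\<delta>::real. \<delta> > 0 \<and>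
        (\<forall>x y::real. x > 0 \<longrightarrow> y > 0 \<longrightarrow> \<bar>x / y - 1\<bar> < \<delta> \<longrightarrow> \<bar>g x / g y - 1\<bar> < \<epsilon>)))"

end

theory Submission
  imports Defs
begin

text \<open>Fix n and \<epsilon>, and choose \<gamma> \<le> \<epsilon> so small that g varies by a factor at most 1 \<plusminus> \<epsilon> on
  intervals [u, (1+\<gamma>)u]. By weak super-multiplicativity a positive proportion of the integers m
  in [x, (1+\<gamma>)x] satisfy f(nm) \<ge> (1-\<gamma>) f(n) f(m). The integers where f is not within a factor
  1 \<plusminus> \<epsilon> of g have density zero, and so do the m for which nm is such an integer; hence some
  good m avoids both, and for it g(nm) is, up to factors 1 \<plusminus> \<epsilon>, at least f(n) g(m).
  Replacing g(m) by g(x) and g(nm) by g(n(1+\<gamma>)x) costs two more such factors.\<close>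

definition zero_density :: "nat set \<Rightarrow> bool" where
  "zero_density S \<longleftrightarrow>
     (\<forall>c>0. \<forall>\<^sub>F N in sequentially. real (card {k\<in>S. 1 \<le> k \<and> k \<le> N}) \<le> c * real N)"

lemma upper_density_zero_imp_zero_density:
  assumes "upper_density S = 0"
  shows "zero_density S"
  unfolding zero_density_def
proof (intro allI impI)
  fix c :: real assume "c > 0"
  have "\<forall>\<^sub>F N in sequentially. ereal (real (card {k \<in> S. 1 \<le> k \<and> k \<le> N}) / real N) < ereal c"
    using assms \<open>c > 0\<close> unfolding upper_density_def by (intro Limsup_lessD) simp
  then show "\<forall>\<^sub>F N in sequentially. real (card {k\<in>S. 1 \<le> k \<and> k \<le> N}) \<le> c * real N"
    by eventually_elim (auto simp: divide_less_eq split: if_splits)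
qed

lemma zero_density_Un:
  assumes "zero_density S" "zero_density T"
  shows "zero_density (S \<union> T)"
  unfolding zero_density_def
proof (intro allI impI)
  fix c :: real assume "c > 0"
  then have "c / 2 > 0" by simp
  then have "\<forall>\<^sub>F N in sequentially.
      real (card {k\<in>S. 1 \<le> k \<and> k \<le> N}) \<le> c / 2 * real N \<and>
      real (card {k\<in>T. 1 \<le> k \<and> k \<le> N}) \<le> c / 2 * real N"
    using assms unfolding zero_density_def by (intro eventually_conj) blast+
  then show "\<forall>\<^sub>F N in sequentially. real (card {k\<in>S \<union> T. 1 \<le> k \<and> k \<le> N}) \<le> c * real N"
  proof eventually_elim
    case (elim N)
    have "{k\<in>S \<union> T. 1 \<le> k \<and> k \<le> N} = {k\<in>S. 1 \<le> k \<and> k \<le> N} \<union> {k\<in>T. 1 \<le> k \<and> k \<le> N}"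
      by auto
    then have "card {k\<in>S \<union> T. 1 \<le> k \<and> k \<le> N}
        \<le> card {k\<in>S. 1 \<le> k \<and> k \<le> N} + card {k\<in>T. 1 \<le> k \<and> k \<le> N}"
      by (simp add: card_Un_le)
    with elim show ?case by linarith
  qed
qed

lemma zero_density_vimage_mult:
  assumes "zero_density S" and n: "n \<ge> 1"
  shows "zero_density {m. n * m \<in> S}"
  unfolding zero_density_def
proof (intro allI impI)
  fix c :: real assume "c > 0"
  then have "c / n > 0" using n by simp
  then obtain N0 where N0: "\<And>N. N \<ge> N0 \<Longrightarrow> real (card {k\<in>S. 1 \<le> k \<and> k \<le> N}) \<le> c / n * real N"
    using assms unfolding zero_density_def eventually_sequentially by blast
  show "\<forall>\<^sub>F N in sequentially. real (card {m\<in>{m. n * m \<in> S}. 1 \<le> m \<and> m \<le> N}) \<le> c * real N"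
    unfolding eventually_sequentially
  proof (intro exI allI impI)
    fix N assume "N \<ge> N0"
    have "(*) n ` {m\<in>{m. n * m \<in> S}. 1 \<le> m \<and> m \<le> N} \<subseteq> {k\<in>S. 1 \<le> k \<and> k \<le> n * N}"
      using n by (auto intro: order_trans[OF _ mult_le_mono2])
    then have "card ((*) n ` {m\<in>{m. n * m \<in> S}. 1 \<le> m \<and> m \<le> N}) \<le> card {k\<in>S. 1 \<le> k \<and> k \<le> n * N}"
      by (rule card_mono[rotated]) simp
    moreover have "inj_on ((*) n) {m\<in>{m. n * m \<in> S}. 1 \<le> m \<and> m \<le> N}"
      using n by (simp add: inj_on_def)
    ultimately have "card {m\<in>{m. n * m \<in> S}. 1 \<le> m \<and> m \<le> N} \<le> card {k\<in>S. 1 \<le> k \<and> k \<le> n * N}"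
      by (simp add: card_image)
    also have "real \<dots> \<le> c / n * real (n * N)"
    proof (rule N0)
      show "N0 \<le> n * N" using \<open>N \<ge> N0\<close> n by (simp add: le_trans[OF _ mult_le_mono1[of 1 n N]])
    qed
    also have "\<dots> = c * real N" using n by simp
    finally show "real (card {m\<in>{m. n * m \<in> S}. 1 \<le> m \<and> m \<le> N}) \<le> c * real N" by simp
  qed
qed

lemma zero_density_avoided_by_large_sets:
  assumes "zero_density E" and "\<delta> > 0" and "K > 0"
  shows "\<exists>x0>0. \<forall>x>x0. \<forall>A. A \<subseteq> {m. 1 \<le> m \<and> real m \<le> K * x} \<longrightarrow> \<delta> * x \<le> real (card A)
           \<longrightarrow> (\<exists>m\<in>A. m \<notin> E)"
proof -
  define c where "c = \<delta> / (2 * K)"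
  have "c > 0" using assms unfolding c_def by simp
  then obtain N0 where N0: "\<And>N. N \<ge> N0 \<Longrightarrow> real (card {k\<in>E. 1 \<le> k \<and> k \<le> N}) \<le> c * real N"
    using assms unfolding zero_density_def eventually_sequentially by blast
  have "(real N0 + 1) / K > 0" using \<open>K > 0\<close> by simp
  show ?thesis
  proof (intro exI[of _ "(real N0 + 1) / K"] conjI allI impI)
    show "(real N0 + 1) / K > 0" by fact
    fix x A
    assume x: "x > (real N0 + 1) / K" and A: "A \<subseteq> {m. 1 \<le> m \<and> real m \<le> K * x}"
      and card_A: "\<delta> * x \<le> real (card A)"
    have Kx: "K * x > real N0 + 1" using x \<open>K > 0\<close> by (simp add: field_simps)
    have "x > 0" using x \<open>(real N0 + 1) / K > 0\<close> by linarith
    define N where "N = nat \<lfloor>K * x\<rfloor>"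
    have "N \<ge> N0" unfolding N_def using Kx by (simp add: le_nat_floor)
    have "real N \<le> K * x" unfolding N_def using Kx by linarith
    show "\<exists>m\<in>A. m \<notin> E"
    proof (rule ccontr)
      assume "\<not> (\<exists>m\<in>A. m \<notin> E)"
      then have "A \<subseteq> {k\<in>E. 1 \<le> k \<and> k \<le> N}"
        using A unfolding N_def by (auto simp: le_nat_floor)
      then have "card A \<le> card {k\<in>E. 1 \<le> k \<and> k \<le> N}" by (rule card_mono[rotated]) simp
      also have "real \<dots> \<le> c * real N" using \<open>N \<ge> N0\<close> by (rule N0)
      also have "\<dots> \<le> c * (K * x)" using \<open>real N \<le> K * x\<close> \<open>c > 0\<close> by simp
      also have "\<dots> = \<delta> * x / 2" unfolding c_def using \<open>K > 0\<close> by simp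
      also have "\<dots> < \<delta> * x" using \<open>x > 0\<close> \<open>\<delta> > 0\<close> by simp
      finally show False using card_A by simp
    qed
  qed
qed

lemma exists_multiplier_near_normal_order:
  fixes f :: "nat \<Rightarrow> real" and g :: "real \<Rightarrow> real"
  assumes wsm: "weakly_super_multiplicative f" and normal: "has_normal_order f g"
    and n: "n \<ge> 1" and fn: "f n \<ge> 0" and e: "0 < e" "e \<le> 1" and \<eta>: "\<eta> > 0"
  shows "\<exists>x0>0. \<forall>x>x0. \<exists>m::nat. m \<ge> 1 \<and> x \<le> real m \<and> real m \<le> (1 + e) * x \<and>
           (1 - e) * (1 - \<eta>) * f n * g (real m) \<le> (1 + \<eta>) * g (real n * real m)"
proof -
  obtain x1 \<delta> where "x1 > 0" "\<delta> > 0" and many_good: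
    "\<And>x. x > x1 \<Longrightarrow> \<delta> * x \<le> real (card {m. m \<ge> 1 \<and> x \<le> real m \<and> real m \<le> (1 + e) * x
                                           \<and> f (n * m) \<ge> (1 - e) * f n * f m})"
    using wsm n e unfolding weakly_super_multiplicative_def by blast
  define E where "E = {k. k \<ge> 1 \<and> \<bar>f k - g (real k)\<bar> \<ge> \<eta> * g (real k)}"
  have "zero_density E"
    using normal \<eta> unfolding has_normal_order_def E_def by (simp add: upper_density_zero_imp_zero_density)
  then have "zero_density (E \<union> {m. n * m \<in> E})"
    using n by (intro zero_density_Un zero_density_vimage_mult)
  then have "\<exists>x0>0. \<forall>x>x0. \<forall>A. A \<subseteq> {m. 1 \<le> m \<and> real m \<le> (1 + e) * x}
      \<longrightarrow> \<delta> * x \<le> real (card A) \<longrightarrow> (\<exists>m\<in>A. m \<notin> E \<union> {m. n * m \<in> E})"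
    using \<open>\<delta> > 0\<close> e by (intro zero_density_avoided_by_large_sets) auto
  then obtain x2 where "x2 > 0" and avoid: "\<And>x A. x > x2 \<Longrightarrow> A \<subseteq> {m. 1 \<le> m \<and> real m \<le> (1 + e) * x}
      \<Longrightarrow> \<delta> * x \<le> real (card A) \<Longrightarrow> \<exists>m\<in>A. m \<notin> E \<union> {m. n * m \<in> E}"
    by blast
  show ?thesis
  proof (intro exI[of _ "max x1 x2"] conjI allI impI)
    show "max x1 x2 > 0" using \<open>x1 > 0\<close> by simp
    fix x assume x: "x > max x1 x2"
    have "\<exists>m\<in>{m. m \<ge> 1 \<and> x \<le> real m \<and> real m \<le> (1 + e) * x
                         \<and> f (n * m) \<ge> (1 - e) * f n * f m}. m \<notin> E \<union> {m. n * m \<in> E}"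
    proof (rule avoid)
      show "\<delta> * x \<le> real (card {m. m \<ge> 1 \<and> x \<le> real m \<and> real m \<le> (1 + e) * x
                                    \<and> f (n * m) \<ge> (1 - e) * f n * f m})"
        using x by (intro many_good) simp
    qed (use x in auto)
    then obtain m where m: "m \<ge> 1" "x \<le> real m" "real m \<le> (1 + e) * x"
      and super: "f (n * m) \<ge> (1 - e) * f n * f m" and "m \<notin> E" "n * m \<notin> E"
      by blast
    have "n * m \<ge> 1" using n m by simp
    have f_m: "(1 - \<eta>) * g (real m) \<le> f m"
      using \<open>m \<notin> E\<close> m unfolding E_def by (auto simp: algebra_simps abs_if split: if_splits)
    have f_nm: "f (n * m) \<le> (1 + \<eta>) * g (real n * real m)"
      using \<open>n * m \<notin> E\<close> \<open>n * m \<ge> 1\<close> unfolding E_def by (auto simp: algebra_simps abs_if split: if_splits)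
    have "(1 - e) * f n * ((1 - \<eta>) * g (real m)) \<le> (1 - e) * f n * f m"
      using f_m fn e by (intro mult_left_mono) auto
    with super f_nm
    have "(1 - e) * (1 - \<eta>) * f n * g (real m) \<le> (1 + \<eta>) * g (real n * real m)"
      by (simp add: algebra_simps)
    with m show "\<exists>m::nat. m \<ge> 1 \<and> x \<le> real m \<and> real m \<le> (1 + e) * x \<and>
           (1 - e) * (1 - \<eta>) * f n * g (real m) \<le> (1 + \<eta>) * g (real n * real m)" by blast
  qed
qed

definition almost_constant_at_scale :: "(real \<Rightarrow> real) \<Rightarrow> real \<Rightarrow> real \<Rightarrow> bool" where
  "almost_constant_at_scale g \<gamma> \<epsilon> \<longleftrightarrow>
     (\<forall>u v. 0 < u \<longrightarrow> u \<le> v \<longrightarrow> v \<le> (1 + \<gamma>) * u \<longrightarrow> (1 - \<epsilon>) * g u \<le> g v \<and> g u \<le> (1 + \<epsilon>) * g v)"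

lemma mono_on_almost_constant_at_scale:
  assumes "mono_on {0<..} g" and g_pos: "\<And>x. x > 0 \<Longrightarrow> g x > 0" and "\<epsilon> \<ge> 0"
  shows "almost_constant_at_scale g \<gamma> \<epsilon>"
  unfolding almost_constant_at_scale_def
proof (intro allI impI)
  fix u v :: real assume "0 < u" "u \<le> v"
  then have "g u \<le> g v" "0 < g u" by (auto intro: mono_onD[OF assms(1)] g_pos)
  moreover have "0 \<le> \<epsilon> * g u" "0 \<le> \<epsilon> * g v" using \<open>\<epsilon> \<ge> 0\<close> \<open>0 < g u\<close> \<open>g u \<le> g v\<close> by simp_all
  ultimately show "(1 - \<epsilon>) * g u \<le> g v \<and> g u \<le> (1 + \<epsilon>) * g v"
    by (simp add: algebra_simps)
qed

lemma log_uniformly_continuous_almost_constant_at_scale: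
  assumes "log_uniformly_continuous g" and g_pos: "\<And>x. x > 0 \<Longrightarrow> g x > 0" and "\<epsilon> > 0"
  shows "\<exists>\<delta>>0. \<forall>\<gamma>. 0 \<le> \<gamma> \<longrightarrow> \<gamma> < \<delta> \<longrightarrow> almost_constant_at_scale g \<gamma> \<epsilon>"
proof -
  obtain \<delta> where "\<delta> > 0" and close: "\<And>x y. x > 0 \<Longrightarrow> y > 0 \<Longrightarrow> \<bar>x / y - 1\<bar> < \<delta> \<Longrightarrow> \<bar>g x / g y - 1\<bar> < \<epsilon>"
    using assms(1,3) unfolding log_uniformly_continuous_def by blast
  have "almost_constant_at_scale g \<gamma> \<epsilon>" if "0 \<le> \<gamma>" "\<gamma> < \<delta>" for \<gamma>
    unfolding almost_constant_at_scale_def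
  proof (intro allI impI conjI)
    fix u v :: real assume uv: "0 < u" "u \<le> v" "v \<le> (1 + \<gamma>) * u"
    then have "v > 0" by simp
    have "1 \<le> v / u" "v / u \<le> 1 + \<gamma>" using uv by (simp_all add: divide_simps)
    with that have "\<bar>g v / g u - 1\<bar> < \<epsilon>" by (intro close \<open>v > 0\<close> \<open>u > 0\<close>) simp
    then show "(1 - \<epsilon>) * g u \<le> g v" using g_pos[OF \<open>u > 0\<close>] by (simp add: abs_less_iff field_simps)
    have "u / v \<le> 1" "1 - \<gamma> \<le> u / v"
    proof -
      show "u / v \<le> 1" using uv by simp
      show "1 - \<gamma> \<le> u / v"
      proof (cases "\<gamma> \<le> 1")
        case True
        then have "(1 - \<gamma>) * v \<le> (1 - \<gamma>) * ((1 + \<gamma>) * u)"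
          using uv by (intro mult_left_mono) auto
        also have "\<dots> = u - \<gamma>\<^sup>2 * u" by (simp add: algebra_simps power2_eq_square)
        also have "\<dots> \<le> u" using uv by simp
        finally show ?thesis using \<open>v > 0\<close> by (simp add: field_simps)
      next
        case False
        moreover have "0 \<le> u / v" using uv by simp
        ultimately show ?thesis by linarith
      qed
    qed
    with that have "\<bar>g u / g v - 1\<bar> < \<epsilon>" by (intro close \<open>v > 0\<close> \<open>u > 0\<close>) simp
    then show "g u \<le> (1 + \<epsilon>) * g v" using g_pos[OF \<open>v > 0\<close>] by (simp add: abs_less_iff field_simps)
  qed
  with \<open>\<delta> > 0\<close> show ?thesis by blast
qed

lemma regular_almost_constant_at_scale:
  assumes "mono_on {0<..} g \<or> log_uniformly_continuous g" and g_pos: "\<And>x. x > 0 \<Longrightarrow> g x > 0"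
    and "\<epsilon> > 0"
  shows "\<exists>\<gamma>>0. \<gamma> \<le> \<epsilon> \<and> almost_constant_at_scale g \<gamma> \<epsilon>"
  using assms(1)
proof
  assume "mono_on {0<..} g"
  then show ?thesis using g_pos \<open>\<epsilon> > 0\<close> by (intro exI[of _ \<epsilon>]) (simp add: mono_on_almost_constant_at_scale)
next
  assume "log_uniformly_continuous g"
  then obtain \<delta> where "\<delta> > 0" and "\<And>\<gamma>. 0 \<le> \<gamma> \<Longrightarrow> \<gamma> < \<delta> \<Longrightarrow> almost_constant_at_scale g \<gamma> \<epsilon>"
    using log_uniformly_continuous_almost_constant_at_scale g_pos \<open>\<epsilon> > 0\<close> by blast
  then show ?thesis using \<open>\<epsilon> > 0\<close> by (intro exI[of _ "min \<epsilon> (\<delta> / 2)"]) auto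
qed

lemma le_of_cubic_bound:
  fixes \<epsilon> F G :: real
  assumes "0 \<le> \<epsilon>" "0 \<le> F" "(1 - \<epsilon>) ^ 3 * F \<le> (1 + \<epsilon>) ^ 2 * G"
  shows "(1 - 5 * \<epsilon>) * F \<le> G"
proof -
  have "0 \<le> 12 * \<epsilon> ^ 2 + 4 * \<epsilon> ^ 3" using assms(1) by simp
  have "(1 + \<epsilon>) ^ 2 * (1 - 5 * \<epsilon>) = (1 - \<epsilon>) ^ 3 - (12 * \<epsilon> ^ 2 + 4 * \<epsilon> ^ 3)"
    by (simp add: power2_eq_square power3_eq_cube algebra_simps)
  also have "\<dots> \<le> (1 - \<epsilon>) ^ 3" using \<open>0 \<le> 12 * \<epsilon> ^ 2 + 4 * \<epsilon> ^ 3\<close> by linarith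
  finally have "(1 + \<epsilon>) ^ 2 * (1 - 5 * \<epsilon>) * F \<le> (1 - \<epsilon>) ^ 3 * F"
    using assms(2) by (intro mult_right_mono)
  then have "(1 + \<epsilon>) ^ 2 * ((1 - 5 * \<epsilon>) * F) \<le> (1 + \<epsilon>) ^ 2 * G"
    using assms(3) by (simp add: mult.assoc)
  then show ?thesis using assms(1) by simp
qed

lemma normal_order_dilation_lower_bound:
  fixes f :: "nat \<Rightarrow> real" and g :: "real \<Rightarrow> real"
  assumes wsm: "weakly_super_multiplicative f" and normal: "has_normal_order f g"
    and g_pos: "\<And>x. x > 0 \<Longrightarrow> g x > 0" and n: "n \<ge> 1" and fn: "f n \<ge> 0"
    and \<epsilon>: "0 < \<epsilon>" "\<epsilon> < 1" and \<gamma>: "0 < \<gamma>" "\<gamma> \<le> \<epsilon>"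
    and const: "almost_constant_at_scale g \<gamma> \<epsilon>"
  shows "\<exists>x0>0. \<forall>x>x0. (1 - 5 * \<epsilon>) * f n * g x \<le> g (real n * (1 + \<gamma>) * x)"
proof -
  obtain x0 where "x0 > 0" and near: "\<And>x. x > x0 \<Longrightarrow> \<exists>m::nat. m \<ge> 1 \<and> x \<le> real m \<and> real m \<le> (1 + \<gamma>) * x \<and>
      (1 - \<gamma>) * (1 - \<epsilon>) * f n * g (real m) \<le> (1 + \<epsilon>) * g (real n * real m)"
    using exists_multiplier_near_normal_order[OF wsm normal n fn, of \<gamma> \<epsilon>] \<epsilon> \<gamma> by auto
  show ?thesis
  proof (intro exI[of _ x0] conjI allI impI)
    show "x0 > 0" by fact
    fix x assume "x > x0"
    then obtain m :: nat where m: "x \<le> real m" "real m \<le> (1 + \<gamma>) * x"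
      and good: "(1 - \<gamma>) * (1 - \<epsilon>) * f n * g (real m) \<le> (1 + \<epsilon>) * g (real n * real m)"
      using near by blast
    have "x > 0" using \<open>x > x0\<close> \<open>x0 > 0\<close> by simp
    have g_m: "(1 - \<epsilon>) * g x \<le> g (real m)"
      using const m \<open>x > 0\<close> unfolding almost_constant_at_scale_def by blast
    have "0 < real n * real m" "real n * real m \<le> real n * (1 + \<gamma>) * x"
      "real n * (1 + \<gamma>) * x \<le> (1 + \<gamma>) * (real n * real m)"
      using n m \<open>x > 0\<close> \<gamma> by (auto simp: mult_left_mono mult.left_commute)
    then have g_nm: "g (real n * real m) \<le> (1 + \<epsilon>) * g (real n * (1 + \<gamma>) * x)"
      using const unfolding almost_constant_at_scale_def by blast
    have "(1 - \<epsilon>) ^ 3 * (f n * g x) = (1 - \<epsilon>) * (1 - \<epsilon>) * f n * ((1 - \<epsilon>) * g x)"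
      by (simp add: power3_eq_cube algebra_simps)
    also have "\<dots> \<le> (1 - \<gamma>) * (1 - \<epsilon>) * f n * g (real m)"
      unfolding mult.assoc[of _ "f n"]
      using \<epsilon> \<gamma> fn g_m g_pos[OF \<open>x > 0\<close>]
      by (intro mult_mono) (auto intro: mult_right_mono mult_nonneg_nonneg)
    also have "\<dots> \<le> (1 + \<epsilon>) * g (real n * real m)" by (fact good)
    also have "\<dots> \<le> (1 + \<epsilon>) ^ 2 * g (real n * (1 + \<gamma>) * x)"
      using g_nm \<epsilon> by (simp add: power2_eq_square mult.assoc)
    finally show "(1 - 5 * \<epsilon>) * f n * g x \<le> g (real n * (1 + \<gamma>) * x)"
      using le_of_cubic_bound[of \<epsilon> "f n * g x"] \<epsilon> fn g_pos[OF \<open>x > 0\<close>] by (simp add: mult.assoc)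
  qed
qed

theorem mainTheorem2:
  fixes f :: "nat \<Rightarrow> real" and g :: "real \<Rightarrow> real"
  assumes f_nonneg: "\<And>n. n \<ge> 1 \<Longrightarrow> f n \<ge> 0"
    and g_pos: "\<And>x. x > 0 \<Longrightarrow> g x > 0"
    and wsm: "weakly_super_multiplicative f"
    and normal: "has_normal_order f g"
    and g_reg: "mono_on {0<..} g \<or> log_uniformly_continuous g"
  shows "\<forall>n::nat. n \<ge> 1 \<longrightarrow> (\<forall>\<epsilon>::real. \<epsilon> > 0 \<longrightarrow>
           (\<exists>\<gamma>::real. 0 < \<gamma> \<and> \<gamma> \<le> \<epsilon> \<and> (\<exists>x0::real. x0 > 0 \<and>
              (\<forall>x::real. x > x0 \<longrightarrow>
                 g (real n * (1 + \<gamma>) * x) \<ge> (1 - 5 * \<epsilon>) * f n * g x))))"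
proof (intro allI impI)
  fix n :: nat and \<epsilon> :: real
  assume n: "n \<ge> 1" and "\<epsilon> > 0"
  obtain \<gamma> where \<gamma>: "0 < \<gamma>" "\<gamma> \<le> \<epsilon>" and const: "almost_constant_at_scale g \<gamma> \<epsilon>"
    using regular_almost_constant_at_scale[OF g_reg g_pos \<open>\<epsilon> > 0\<close>] by blast
  show "\<exists>\<gamma>. 0 < \<gamma> \<and> \<gamma> \<le> \<epsilon> \<and> (\<exists>x0>0. \<forall>x>x0. g (real n * (1 + \<gamma>) * x) \<ge> (1 - 5 * \<epsilon>) * f n * g x)"
  proof (cases "\<epsilon> < 1")
    case True
    then show ?thesis
      using normal_order_dilation_lower_bound[OF wsm normal g_pos n f_nonneg[OF n] \<open>\<epsilon> > 0\<close> True \<gamma> const] \<gamma>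
      by auto
  next
    case False
    have "(1 - 5 * \<epsilon>) * f n * g x \<le> g (real n * (1 + \<gamma>) * x)" if "x > 1" for x
    proof -
      have "(1 - 5 * \<epsilon>) * f n * g x \<le> 0"
        using False f_nonneg[OF n] g_pos[of x] that by (intro mult_nonpos_nonneg) auto
      also have "0 < g (real n * (1 + \<gamma>) * x)" using n \<gamma> that by (intro g_pos) simp
      finally show ?thesis by simp
    qed
    then show ?thesis using \<gamma> by (intro exI[of _ \<gamma>]) (auto intro!: exI[of _ 1])
  qed
qed

end
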